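(* Let $d\ge2$ and $\mathbf{x}_i=(x_{1,i},\ldots,x_{n_i,i})^\top\in\mathbb{R}^{n_i}$, $i\in[d]$, with $\mathbf{1}_{n_i}^\top\mathbf{x}_i=\mathbf{1}_{n_{i+1}}^\top\mathbf{x}_{i+1}$ for $i\in[d-1]$. Then $$\frac{n_1\cdots n_d}{\max_in_i}\sum_{i=1}^d\|\mathbf{x}_i\|^2\le\sum_{j_1=1}^{n_1}\cdots\sum_{j_d=1}^{n_d}(x_{j_1,1}+\cdots+x_{j_d,d})^2\le\sum_{i=1}^d\frac{dn_1\cdots n_d}{n_i}\|\mathbf{x}_i\|^2\le\frac{dn_1\cdots n_d}{\min_in_i}\sum_{i=1}^d\|\mathbf{x}_i\|^2.$$
   Context: $\|\cdot\|$ is the Euclidean norm and $\mathbf{1}_n$ the all-ones vector. *)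

theory Defs
  imports Complex_Main "HOL-Library.FuncSet"
begin

end

(*
  Let N = n_1 ... n_d. Expanding the square, the sum over all index tuples J splits
  into diagonal terms (x_{J i, i})^2, each counted prod_{m <> i} n_m = N / n_i times,
  and cross terms x_{J i, i} x_{J k, k}, which sum to (1^T x_i)(1^T x_k) prod_{m <> i, k} n_m.
  Since all the sums 1^T x_i agree, the cross terms are squares times counts, hence
  nonnegative, which gives the lower bound. The upper bound is the pointwise estimate
  (sum_i a_i)^2 <= d sum_i a_i^2. Comparing N / n_i with N / max n and N / min n
  produces the outer bounds.
*)
theory Submission
  imports Defs "HOL-Analysis.Convex"
begin

lemma sum_PiE_prod_coordinates:
  fixes f :: "'a \<Rightarrow> 'b \<Rightarrow> 'c::comm_semiring_1"
  assumes "finite I" "K \<subseteq> I" "\<And>i. i \<in> I \<Longrightarrow> finite (B i)"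
  shows "(\<Sum>J\<in>PiE I B. \<Prod>k\<in>K. f k (J k))
       = (\<Prod>k\<in>K. \<Sum>y\<in>B k. f k y) * of_nat (\<Prod>m\<in>I - K. card (B m))"
proof -
  define F where "F m y = (if m \<in> K then f m y else 1)" for m y
  have prod_split: "(\<Prod>m\<in>I. g m) = (\<Prod>m\<in>I - K. g m) * (\<Prod>m\<in>K. g m)" for g :: "'a \<Rightarrow> 'c"
    by (rule prod.subset_diff[OF assms(2,1)])
  have "(\<Sum>J\<in>PiE I B. \<Prod>k\<in>K. f k (J k)) = (\<Sum>J\<in>PiE I B. \<Prod>m\<in>I. F m (J m))"
    by (simp add: prod_split F_def)
  also have "\<dots> = (\<Prod>m\<in>I. \<Sum>y\<in>B m. F m y)"
    using assms(1,3) by (rule prod_sum_PiE[symmetric])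
  also have "\<dots> = (\<Prod>k\<in>K. \<Sum>y\<in>B k. f k y) * of_nat (\<Prod>m\<in>I - K. card (B m))"
    by (simp add: prod_split F_def of_nat_prod mult.commute)
  finally show ?thesis .
qed

lemma sum_PiE_coordinate:
  fixes h :: "'b \<Rightarrow> 'c::comm_semiring_1"
  assumes "finite I" "i \<in> I" "\<And>i. i \<in> I \<Longrightarrow> finite (B i)"
  shows "(\<Sum>J\<in>PiE I B. h (J i)) = (\<Sum>y\<in>B i. h y) * of_nat (\<Prod>m\<in>I - {i}. card (B m))"
  using sum_PiE_prod_coordinates[of I "{i}" B "\<lambda>_. h"] assms by simp

lemma sum_PiE_two_coordinates:
  fixes g h :: "'b \<Rightarrow> 'c::comm_semiring_1"
  assumes "finite I" "i \<in> I" "k \<in> I" "i \<noteq> k" "\<And>i. i \<in> I \<Longrightarrow> finite (B i)"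
  shows "(\<Sum>J\<in>PiE I B. g (J i) * h (J k))
       = (\<Sum>y\<in>B i. g y) * (\<Sum>y\<in>B k. h y) * of_nat (\<Prod>m\<in>I - {i, k}. card (B m))"
  using sum_PiE_prod_coordinates[of I "{i, k}" B "\<lambda>m. if m = i then g else h"] assms by simp

lemma sum_PiE_square_of_sum_lower:
  fixes x :: "'a \<Rightarrow> 'b \<Rightarrow> real"
  assumes "finite I" "\<And>i. i \<in> I \<Longrightarrow> finite (B i)"
    and "\<And>i. i \<in> I \<Longrightarrow> (\<Sum>y\<in>B i. x i y) = s"
  shows "(\<Sum>i\<in>I. real (\<Prod>m\<in>I - {i}. card (B m)) * (\<Sum>y\<in>B i. (x i y)\<^sup>2))
       \<le> (\<Sum>J\<in>PiE I B. (\<Sum>i\<in>I. x i (J i))\<^sup>2)"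
proof -
  define T where "T i k = (\<Sum>J\<in>PiE I B. x i (J i) * x k (J k))" for i k
  have diagonal: "T i i = real (\<Prod>m\<in>I - {i}. card (B m)) * (\<Sum>y\<in>B i. (x i y)\<^sup>2)"
    if "i \<in> I" for i
    using sum_PiE_coordinate[of I i B "\<lambda>y. (x i y)\<^sup>2"] assms(1,2) that
    by (simp add: T_def power2_eq_square mult.commute)
  have off_diagonal: "T i k \<ge> 0" if "i \<in> I" "k \<in> I" "i \<noteq> k" for i k
    \<comment> \<open>the equal sums turn the cross term into \<open>s\<^sup>2\<close> times a cardinality\<close>
    using sum_PiE_two_coordinates[of I i k B "x i" "x k"] assms that by (simp add: T_def prod_nonneg)
  have "(\<Sum>J\<in>PiE I B. (\<Sum>i\<in>I. x i (J i))\<^sup>2) = (\<Sum>i\<in>I. \<Sum>k\<in>I. T i k)"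
    unfolding T_def power2_eq_square sum_product
    by (subst sum.swap) (simp add: sum.swap[of _ "PiE I B"])
  also have "\<dots> \<ge> (\<Sum>i\<in>I. T i i)"
  proof (intro sum_mono)
    fix i assume "i \<in> I"
    then have "(\<Sum>k\<in>I. T i k) = T i i + (\<Sum>k\<in>I - {i}. T i k)"
      using assms(1) by (simp add: sum.remove)
    moreover have "(\<Sum>k\<in>I - {i}. T i k) \<ge> 0"
      using \<open>i \<in> I\<close> by (intro sum_nonneg off_diagonal) auto
    ultimately show "T i i \<le> (\<Sum>k\<in>I. T i k)" by simp
  qed
  finally show ?thesis by (simp add: diagonal)
qed

lemma sum_PiE_square_of_sum_upper:
  fixes x :: "'a \<Rightarrow> 'b \<Rightarrow> real"
  assumes "finite I" "\<And>i. i \<in> I \<Longrightarrow> finite (B i)"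
  shows "(\<Sum>J\<in>PiE I B. (\<Sum>i\<in>I. x i (J i))\<^sup>2)
       \<le> real (card I) * (\<Sum>i\<in>I. real (\<Prod>m\<in>I - {i}. card (B m)) * (\<Sum>y\<in>B i. (x i y)\<^sup>2))"
proof -
  have "(\<Sum>J\<in>PiE I B. (\<Sum>i\<in>I. x i (J i))\<^sup>2)
      \<le> (\<Sum>J\<in>PiE I B. real (card I) * (\<Sum>i\<in>I. (x i (J i))\<^sup>2))"
    using sum_squared_le_sum_of_squares by (intro sum_mono) (simp add: mult.commute)
  also have "\<dots> = real (card I) * (\<Sum>i\<in>I. \<Sum>J\<in>PiE I B. (x i (J i))\<^sup>2)"
    by (simp add: sum_distrib_left sum.swap[of _ "PiE I B"])
  also have "\<dots> = real (card I) * (\<Sum>i\<in>I. real (\<Prod>m\<in>I - {i}. card (B m)) * (\<Sum>y\<in>B i. (x i y)\<^sup>2))"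
  proof (intro arg_cong[where f = "(*) _"] sum.cong refl)
    fix i assume "i \<in> I"
    show "(\<Sum>J\<in>PiE I B. (x i (J i))\<^sup>2) = real (\<Prod>m\<in>I - {i}. card (B m)) * (\<Sum>y\<in>B i. (x i y)\<^sup>2)"
      using sum_PiE_coordinate[OF assms(1) \<open>i \<in> I\<close> assms(2), where h = "\<lambda>y. (x i y)\<^sup>2"]
      by (simp only: mult.commute)
  qed
  finally show ?thesis .
qed

lemma eq_first_if_consecutive_eq:
  fixes f :: "nat \<Rightarrow> 'a" and i :: nat
  assumes "\<forall>i. i + 1 < d \<longrightarrow> f i = f (i + 1)" "i < d"
  shows "f i = f 0"
  using assms(2)
proof (induction i)
  case (Suc i)
  then show ?case using assms(1)[rule_format, of i] by simp
qed simp

lemma sum_divide_between_Max_Min: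
  fixes n :: "'a \<Rightarrow> nat" and q :: "'a \<Rightarrow> real"
  assumes "finite A" "\<forall>i\<in>A. n i \<ge> 1" "\<forall>i\<in>A. q i \<ge> 0" "c \<ge> 0"
  shows "c / real (Max (n ` A)) * (\<Sum>i\<in>A. q i) \<le> (\<Sum>i\<in>A. c / real (n i) * q i)
       \<and> (\<Sum>i\<in>A. c / real (n i) * q i) \<le> c / real (Min (n ` A)) * (\<Sum>i\<in>A. q i)"
proof -
  have "c / real (Max (n ` A)) \<le> c / real (n i) \<and> c / real (n i) \<le> c / real (Min (n ` A))"
    if "i \<in> A" for i
  proof -
    have "n i \<le> Max (n ` A)" "Min (n ` A) \<le> n i"
      using assms(1) that by auto
    moreover have "Min (n ` A) \<ge> 1"
      using assms(1,2) that by (subst Min_ge_iff) auto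
    ultimately show ?thesis
      using assms(2,4) that by (auto intro!: divide_left_mono)
  qed
  then show ?thesis
    unfolding sum_distrib_left using assms(3)
    by (intro conjI sum_mono mult_right_mono) auto
qed

theorem lemma2p3:
  fixes d :: nat and n :: "nat \<Rightarrow> nat" and x :: "nat \<Rightarrow> nat \<Rightarrow> real"
  assumes "d \<ge> 2"
    and "\<forall>i<d. n i \<ge> 1"
    and "\<forall>i. i + 1 < d \<longrightarrow> (\<Sum>j<n i. x i j) = (\<Sum>j<n (i + 1). x (i + 1) j)"
  shows "real (\<Prod>i<d. n i) / real (Max (n ` {..<d})) * (\<Sum>i<d. \<Sum>j<n i. (x i j)\<^sup>2)
           \<le> (\<Sum>J\<in>(\<Pi>\<^sub>E i\<in>{..<d}. {..<n i}). (\<Sum>i<d. x i (J i))\<^sup>2)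
       \<and> (\<Sum>J\<in>(\<Pi>\<^sub>E i\<in>{..<d}. {..<n i}). (\<Sum>i<d. x i (J i))\<^sup>2)
           \<le> (\<Sum>i<d. real d * real (\<Prod>k<d. n k) / real (n i) * (\<Sum>j<n i. (x i j)\<^sup>2))
       \<and> (\<Sum>i<d. real d * real (\<Prod>k<d. n k) / real (n i) * (\<Sum>j<n i. (x i j)\<^sup>2))
           \<le> real d * real (\<Prod>i<d. n i) / real (Min (n ` {..<d})) * (\<Sum>i<d. \<Sum>j<n i. (x i j)\<^sup>2)"
proof -
  define N where "N = real (\<Prod>i<d. n i)"
  define q where "q i = (\<Sum>j<n i. (x i j)\<^sup>2)" for i
  define S where "S = (\<Sum>J\<in>(\<Pi>\<^sub>E i\<in>{..<d}. {..<n i}). (\<Sum>i<d. x i (J i))\<^sup>2)"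
  have q_nonneg: "q i \<ge> 0" for i
    unfolding q_def by (simp add: sum_nonneg)
  have N_nonneg: "N \<ge> 0"
    unfolding N_def by (rule of_nat_0_le_iff)
  have weight: "real (\<Prod>m\<in>{..<d} - {i}. card {..<n m}) = N / real (n i)" if "i < d" for i
    using prod_diff1[of "{..<d}" "\<lambda>m. real (n m)" i] assms(2)[rule_format, OF that] that
    by (simp add: N_def)
  have weighted: "(\<Sum>i<d. real (\<Prod>m\<in>{..<d} - {i}. card {..<n m}) * q i)
      = (\<Sum>i<d. N / real (n i) * q i)"
    using weight by (intro sum.cong refl) (metis lessThan_iff)
  have "(\<Sum>i<d. N / real (n i) * q i) \<le> S"
    unfolding weighted[symmetric] unfolding q_def S_def
    by (rule sum_PiE_square_of_sum_lower) (auto intro: eq_first_if_consecutive_eq[OF assms(3)])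
  moreover have "S \<le> (\<Sum>i<d. real d * N / real (n i) * q i)"
  proof -
    have "S \<le> real d * (\<Sum>i<d. N / real (n i) * q i)"
      unfolding weighted[symmetric] unfolding q_def S_def
      using sum_PiE_square_of_sum_upper[of "{..<d}" "\<lambda>i. {..<n i}" x] by simp
    then show ?thesis
      by (simp add: sum_distrib_left mult.assoc)
  qed
  moreover have "N / real (Max (n ` {..<d})) * (\<Sum>i<d. q i) \<le> (\<Sum>i<d. N / real (n i) * q i)"
    and "(\<Sum>i<d. real d * N / real (n i) * q i) \<le> real d * N / real (Min (n ` {..<d})) * (\<Sum>i<d. q i)"
    using sum_divide_between_Max_Min[of "{..<d}" n q N] sum_divide_between_Max_Min[of "{..<d}" n q "real d * N"]
      assms(2) q_nonneg N_nonneg by auto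
  ultimately show ?thesis
    unfolding N_def q_def S_def by linarith
qed

end
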